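(* Any averaging system (with weight threshold $\rho$) in which every $G_t$ has at most $m$ connected components can be interpreted as an $m$-twist system with the same $s$-energy. Specifically, at each time the blocks of the twist system are the index intervals of the agents spanned by the blocks of the embedded $G_t$, and the $s$-energy of the twist system equals that of the averaging system for all $s\in(0,1]$.
   Context: Averaging system: - $(G_t)_{t\ge0}$ are undirected graphs on $[n]$, each with self-loops at all vertices. - $P_t$ is row-stochastic with $(P_t)_{ij}>0$ iff $\{i,j\}$ is an edge of $G_t$, and all nonzero entries are $\ge\rho\in(0,1/2]$. - The dynamics is $x(t+1)=P_tx(t)$. - The blocks at time $t$ are the maximal intervals of the union of the closed intervals with endpoints $x_i(t),x_j(t)$ over edges $\{i,j\}$, $i\ne j$, of $G_t$. - The $s$-energy is $\sum_t\sum_{\text{blocks}}(\text{length})^s$. $m$-twist system (parameter $\rho$): at each time $t$, relabel the agents so that their positions satisfy $x_1\le\dots\le x_n$. A partition of $[n]$ into at most $m$ intervals of consecutive indices $[u_{t,l},v_{t,l}]$ (the blocks) is specified. The next positions, again sorted as $y_1\le\dots\le y_n$ (agents keep their ranks), are any positions satisfying, for every block $[u,v]$ and every $i\in[u,v]$, $$(1-\rho)x_u+\rho x_{\min\{i+1,v\}}\le y_i\le\rho x_{\max\{i-1,u\}}+(1-\rho)x_v.$$ The $s$-energy of a twist system is $\sum_{t\ge0}\sum_l\big(x_{v_{t,l}}(t)-x_{u_{t,l}}(t)\big)^s$. *)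

theory Defs
  imports "HOL-Analysis.Analysis"
begin

text \<open>Agents are 0..<n. E t i j : {i,j} is an edge of G_t. P t i j : entry of P_t.
  x t i : position of agent i at time t.\<close>

definition averaging_system ::
  "nat \<Rightarrow> real \<Rightarrow> (nat \<Rightarrow> nat \<Rightarrow> nat \<Rightarrow> bool) \<Rightarrow> (nat \<Rightarrow> nat \<Rightarrow> nat \<Rightarrow> real)
   \<Rightarrow> (nat \<Rightarrow> nat \<Rightarrow> real) \<Rightarrow> bool" where
  "averaging_system n \<rho> E P x \<longleftrightarrow>
     0 < \<rho> \<and> \<rho> \<le> 1/2 \<and>
     (\<forall>t. (\<forall>i<n. E t i i) \<and>
          (\<forall>i<n. \<forall>j<n. E t i j \<longrightarrow> E t j i) \<and>
          (\<forall>i<n. \<forall>j<n. 0 \<le> P t i j \<and> (0 < P t i j \<longleftrightarrow> E t i j) \<and>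
                        (0 < P t i j \<longrightarrow> \<rho> \<le> P t i j)) \<and>
          (\<forall>i<n. (\<Sum>j<n. P t i j) = 1) \<and>
          (\<forall>i<n. x (Suc t) i = (\<Sum>j<n. P t i j * x t j)))"

definition num_components :: "nat \<Rightarrow> (nat \<Rightarrow> nat \<Rightarrow> bool) \<Rightarrow> nat" where
  "num_components n G = card ({..<n} // ({(i,j). i < n \<and> j < n \<and> G i j}\<^sup>*))"

definition avg_union :: "nat \<Rightarrow> (nat \<Rightarrow> nat \<Rightarrow> bool) \<Rightarrow> (nat \<Rightarrow> real) \<Rightarrow> real set" where
  "avg_union n G y = (\<Union>{ {min (y i) (y j) .. max (y i) (y j)} | i j.
                          i < n \<and> j < n \<and> i \<noteq> j \<and> G i j})"

definition avg_blocks :: "nat \<Rightarrow> (nat \<Rightarrow> nat \<Rightarrow> bool) \<Rightarrow> (nat \<Rightarrow> real) \<Rightarrow> real set set" where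
  "avg_blocks n G y = {connected_component_set (avg_union n G y) p | p. p \<in> avg_union n G y}"

definition avg_energy ::
  "nat \<Rightarrow> (nat \<Rightarrow> nat \<Rightarrow> nat \<Rightarrow> bool) \<Rightarrow> (nat \<Rightarrow> nat \<Rightarrow> real) \<Rightarrow> real \<Rightarrow> ennreal" where
  "avg_energy n E x s = (\<Sum>t. ennreal (\<Sum>C\<in>avg_blocks n (E t) (x t). (Sup C - Inf C) powr s))"

text \<open>m-twist system: z t is the sorted position vector at time t (z t i = position of rank i),
  B t is the set of blocks, given as index intervals (u,v) meaning {u..v}.\<close>
definition twist_system ::
  "nat \<Rightarrow> real \<Rightarrow> nat \<Rightarrow> (nat \<Rightarrow> nat \<Rightarrow> real) \<Rightarrow> (nat \<Rightarrow> (nat \<times> nat) set) \<Rightarrow> bool" where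
  "twist_system n \<rho> m z B \<longleftrightarrow>
     (\<forall>t. (\<forall>i j. i \<le> j \<longrightarrow> j < n \<longrightarrow> z t i \<le> z t j) \<and>
          finite (B t) \<and> card (B t) \<le> m \<and>
          (\<forall>(u,v)\<in>B t. u \<le> v \<and> v < n) \<and>
          (\<forall>i<n. \<exists>!b\<in>B t. i \<in> {fst b..snd b}) \<and>
          (\<forall>(u,v)\<in>B t. \<forall>i\<in>{u..v}.
              (1-\<rho>) * z t u + \<rho> * z t (min (i+1) v) \<le> z (Suc t) i \<and>
              z (Suc t) i \<le> \<rho> * z t (max (i-1) u) + (1-\<rho>) * z t v))"

definition twist_energy ::
  "(nat \<Rightarrow> nat \<Rightarrow> real) \<Rightarrow> (nat \<Rightarrow> (nat \<times> nat) set) \<Rightarrow> real \<Rightarrow> ennreal" where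
  "twist_energy z B s = (\<Sum>t. ennreal (\<Sum>(u,v)\<in>B t. (z t v - z t u) powr s))"

definition span_interval :: "nat \<Rightarrow> (nat \<Rightarrow> real) \<Rightarrow> real set \<Rightarrow> nat \<times> nat" where
  "span_interval n w C = (Min {i. i < n \<and> w i \<in> C}, Max {i. i < n \<and> w i \<in> C})"

end

theory Submission
  imports Defs
begin

text \<open>Sort the agents by position at each time. A block of the averaging system is a closed
  interval whose endpoints are agent positions, so it covers a run of consecutive ranks; agents lying
  in no block become singleton twist blocks. Agents joined by an edge of \<open>G\<^sub>t\<close> lie in a
  common block, hence there are at most as many twist blocks as connected components. No edge
  interval crosses the boundary of a block, so an agent of a block averages only over positions in
  that block, with weight at least \<open>\<rho>\<close> on itself and on each neighbour. Counting the agents that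
  can end up below \<open>(1 - \<rho>) x\<^sub>u + \<rho> x\<^sub>i\<^sub>+\<^sub>1\<close> bounds the next position of rank \<open>i\<close> from below; the
  upper bound is the mirror image. Singleton blocks have length zero, so the energies agree.\<close>

section \<open>Blocks of an averaging system\<close>

abbreviation edge_interval :: "(nat \<Rightarrow> real) \<Rightarrow> nat \<Rightarrow> nat \<Rightarrow> real set" where
  "edge_interval y j k \<equiv> {min (y j) (y k)..max (y j) (y k)}"

lemma mem_avg_union_iff:
  "p \<in> avg_union n G y \<longleftrightarrow> (\<exists>j<n. \<exists>k<n. j \<noteq> k \<and> G j k \<and> p \<in> edge_interval y j k)"
  unfolding avg_union_def by blast

lemma edge_interval_subset_avg_union:
  "j < n \<Longrightarrow> k < n \<Longrightarrow> j \<noteq> k \<Longrightarrow> G j k \<Longrightarrow> edge_interval y j k \<subseteq> avg_union n G y"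
  unfolding subset_iff mem_avg_union_iff by blast

lemma compact_avg_union: "compact (avg_union n G y)"
proof -
  have "{edge_interval y j k | j k. j < n \<and> k < n \<and> j \<noteq> k \<and> G j k}
          \<subseteq> (\<lambda>(j, k). edge_interval y j k) ` ({..<n} \<times> {..<n})"
    by auto
  then have "finite {edge_interval y j k | j k. j < n \<and> k < n \<and> j \<noteq> k \<and> G j k}"
    by (rule finite_subset) auto
  then show ?thesis
    unfolding avg_union_def by (intro compact_Union) auto
qed

lemma avg_union_uminus: "avg_union n G (\<lambda>i. - y i) = uminus ` avg_union n G y"
proof -
  have mem_flip: "p \<in> edge_interval (\<lambda>i. - y i) j k \<longleftrightarrow> - p \<in> edge_interval y j k" for p j k
    by (auto simp: min_def max_def)
  have "p \<in> avg_union n G (\<lambda>i. - y i) \<longleftrightarrow> - p \<in> avg_union n G y" for p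
    unfolding mem_avg_union_iff by (simp only: mem_flip)
  then show ?thesis by (force simp: image_iff)
qed

lemma avg_block_subset: "C \<in> avg_blocks n G y \<Longrightarrow> C \<subseteq> avg_union n G y"
  unfolding avg_blocks_def using connected_component_subset by blast

lemma avg_block_eq_component:
  "C \<in> avg_blocks n G y \<Longrightarrow> q \<in> C \<Longrightarrow> C = connected_component_set (avg_union n G y) q"
  unfolding avg_blocks_def using connected_component_eq by blast

lemma component_in_avg_blocks:
  "q \<in> avg_union n G y \<Longrightarrow> connected_component_set (avg_union n G y) q \<in> avg_blocks n G y"
  unfolding avg_blocks_def by blast

lemma Union_avg_blocks: "\<Union>(avg_blocks n G y) = avg_union n G y"
proof
  show "avg_union n G y \<subseteq> \<Union>(avg_blocks n G y)"
    using component_in_avg_blocks connected_component_refl by fast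
qed (use avg_block_subset in blast)

text \<open>Blocks and points off the union are edge-closed, and this is all that the bounds on the next
  positions use.\<close>

definition edge_closed :: "nat \<Rightarrow> (nat \<Rightarrow> nat \<Rightarrow> bool) \<Rightarrow> (nat \<Rightarrow> real) \<Rightarrow> real set \<Rightarrow> bool" where
  "edge_closed n G y S \<longleftrightarrow>
     (\<forall>j<n. \<forall>k<n. j \<noteq> k \<longrightarrow> G j k \<longrightarrow> edge_interval y j k \<inter> S \<noteq> {} \<longrightarrow> edge_interval y j k \<subseteq> S)"

lemma edge_closedD:
  assumes "edge_closed n G y S" "j < n" "k < n" "j \<noteq> k" "G j k" "q \<in> edge_interval y j k" "q \<in> S"
  shows "edge_interval y j k \<subseteq> S"
  using assms unfolding edge_closed_def by blast

lemma edge_closed_avg_block: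
  assumes C: "C \<in> avg_blocks n G y"
  shows "edge_closed n G y C"
  unfolding edge_closed_def
proof (intro allI impI)
  fix j k assume jk: "j < n" "k < n" "j \<noteq> k" "G j k" and "edge_interval y j k \<inter> C \<noteq> {}"
  then obtain q where q: "q \<in> edge_interval y j k" "q \<in> C" by blast
  have "edge_interval y j k \<subseteq> connected_component_set (avg_union n G y) q"
    using q(1) edge_interval_subset_avg_union[of j n k G y, OF jk] by (intro connected_component_maximal) auto
  then show "edge_interval y j k \<subseteq> C"
    using avg_block_eq_component[OF C q(2)] by simp
qed

lemma edge_closed_disjoint:
  assumes "S \<inter> avg_union n G y = {}"
  shows "edge_closed n G y S"
proof (unfold edge_closed_def, intro allI impI)
  fix j k assume "j < n" "k < n" "j \<noteq> k" "G j k" "edge_interval y j k \<inter> S \<noteq> {}"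
  with assms edge_interval_subset_avg_union[of j n k G y] show "edge_interval y j k \<subseteq> S"
    by blast
qed

lemma edge_closed_uminus:
  assumes "edge_closed n G y S"
  shows "edge_closed n G (\<lambda>i. - y i) (uminus ` S)"
proof (unfold edge_closed_def, intro allI impI)
  fix j k assume jk: "j < n" "k < n" "j \<noteq> k" "G j k"
    and meet: "edge_interval (\<lambda>i. - y i) j k \<inter> uminus ` S \<noteq> {}"
  have flip: "edge_interval (\<lambda>i. - y i) j k = uminus ` edge_interval y j k"
    by (simp add: min_def max_def)
  have "edge_interval y j k \<inter> S \<noteq> {}"
    using meet unfolding flip by auto
  then obtain q where "q \<in> edge_interval y j k" "q \<in> S" by blast
  then have "edge_interval y j k \<subseteq> S" by (rule edge_closedD[OF assms jk])
  then show "edge_interval (\<lambda>i. - y i) j k \<subseteq> uminus ` S"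
    unfolding flip by (rule image_mono)
qed

lemma edge_closed_neighbour:
  assumes "edge_closed n G y S" "j < n" "k < n" "G j k" "y j \<in> S"
  shows "y k \<in> S"
proof (cases "j = k")
  case False
  then have "edge_interval y j k \<subseteq> S"
    by (rule edge_closedD[OF assms(1-3) _ assms(4), of "y j"]) (use assms(5) in auto)
  then show ?thesis by (meson atLeastAtMost_iff max.cobounded2 min.cobounded2 subsetD)
qed (use assms in simp)

lemma edge_closed_neighbour_above:
  assumes "edge_closed n G y {a..b}" "a \<le> b" "j < n" "k < n" "G j k" "b < y j"
  shows "b < y k"
proof (rule ccontr)
  assume "\<not> b < y k"
  then have "edge_interval y j k \<subseteq> {a..b}"
    by (intro edge_closedD[OF assms(1,3,4) _ assms(5), of b]) (use assms in auto)
  then show False using assms by simp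
qed

lemma edge_closed_Icc_endpoints:
  assumes closed: "edge_closed n G y {a..b}" and sub: "{a..b} \<subseteq> avg_union n G y" and "a \<le> b"
  shows "(\<exists>i<n. y i = a) \<and> (\<exists>i<n. y i = b)"
proof -
  have "a \<in> avg_union n G y" "b \<in> avg_union n G y" using sub \<open>a \<le> b\<close> by auto
  then obtain j k j' k' where jk: "j < n" "k < n" "j \<noteq> k" "G j k" "a \<in> edge_interval y j k"
    and jk': "j' < n" "k' < n" "j' \<noteq> k'" "G j' k'" "b \<in> edge_interval y j' k'"
    unfolding mem_avg_union_iff by blast
  have "edge_interval y j k \<subseteq> {a..b}" "edge_interval y j' k' \<subseteq> {a..b}"
    using \<open>a \<le> b\<close> by (intro edge_closedD[OF closed jk(1-5)] edge_closedD[OF closed jk'(1-5)]; simp)+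
  then have "min (y j) (y k) = a" "max (y j') (y k') = b" using jk(5) jk'(5) by auto
  then show ?thesis
    using jk(1,2) jk'(1,2) by (metis min_def max_def)
qed

lemma avg_block_Icc:
  assumes C: "C \<in> avg_blocks n G y"
  obtains a b where "a < n" "b < n" "y a \<le> y b" "C = {y a..y b}"
proof -
  obtain p where p: "p \<in> avg_union n G y" "C = connected_component_set (avg_union n G y) p"
    using C unfolding avg_blocks_def by blast
  have "compact C"
    unfolding compact_eq_bounded_closed
  proof
    show "bounded C"
      using compact_avg_union[of n G y] avg_block_subset[OF C] compact_imp_bounded bounded_subset by blast
    show "closed C"
      using p(2) compact_avg_union[of n G y] by (simp add: closed_connected_component compact_imp_closed)
  qed
  moreover have "connected C" using p(2) by simp
  ultimately obtain a b where ab: "C = {a..b}"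
    using connected_compact_interval_1 by blast
  moreover have "a \<le> b" using ab p(1,2) connected_component_refl by fastforce
  ultimately obtain i j where "i < n" "j < n" "y i = a" "y j = b"
    using edge_closed_Icc_endpoints[of n G y a b] edge_closed_avg_block[OF C] avg_block_subset[OF C]
    by auto
  with ab \<open>a \<le> b\<close> show ?thesis using that by blast
qed

lemma finite_avg_blocks: "finite (avg_blocks n G y)"
proof -
  have "avg_blocks n G y \<subseteq> (\<lambda>a. connected_component_set (avg_union n G y) (y a)) ` {..<n}"
  proof
    fix C assume C: "C \<in> avg_blocks n G y"
    then obtain a b where "a < n" "y a \<le> y b" "C = {y a..y b}" by (rule avg_block_Icc)
    then show "C \<in> (\<lambda>a. connected_component_set (avg_union n G y) (y a)) ` {..<n}"
      using avg_block_eq_component[OF C] by auto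
  qed
  then show ?thesis by (rule finite_subset) simp
qed

section \<open>Blocks and connected components\<close>

text \<open>Labels are constant along edges, so there are at most as many labels as components.\<close>

definition block_label :: "nat \<Rightarrow> (nat \<Rightarrow> nat \<Rightarrow> bool) \<Rightarrow> (nat \<Rightarrow> real) \<Rightarrow> nat \<Rightarrow> real set + nat" where
  "block_label n G y a =
     (if y a \<in> avg_union n G y then Inl (connected_component_set (avg_union n G y) (y a)) else Inr a)"

lemma block_label_edge:
  assumes "a < n" "b < n" "G a b"
  shows "block_label n G y a = block_label n G y b"
proof (cases "a = b")
  case False
  let ?U = "avg_union n G y"
  have sub: "edge_interval y a b \<subseteq> ?U"
    using edge_interval_subset_avg_union[of a n b G y] assms False by blast
  then have "y a \<in> ?U" "y b \<in> ?U" by auto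
  moreover have "edge_interval y a b \<subseteq> connected_component_set ?U (y a)"
    by (rule connected_component_maximal) (use sub in auto)
  then have "y b \<in> connected_component_set ?U (y a)"
    by (meson atLeastAtMost_iff max.cobounded2 min.cobounded2 subsetD)
  ultimately show ?thesis
    unfolding block_label_def by (simp add: connected_component_eq)
qed simp

lemma block_label_rtrancl:
  "(a, b) \<in> {(i, j). i < n \<and> j < n \<and> G i j}\<^sup>* \<Longrightarrow> block_label n G y a = block_label n G y b"
  by (induction rule: rtrancl_induct) (auto dest: block_label_edge)

lemma card_image_le_card_quotient:
  assumes "finite A" and refl: "\<And>a. a \<in> A \<Longrightarrow> (a, a) \<in> r"
    and respects: "\<And>a b. a \<in> A \<Longrightarrow> b \<in> A \<Longrightarrow> (a, b) \<in> r \<Longrightarrow> f a = f b"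
  shows "card (f ` A) \<le> card (A // r)"
proof -
  define g where "g Q = f (SOME a. a \<in> A \<inter> Q)" for Q
  have "f ` A \<subseteq> g ` (A // r)"
  proof
    fix c assume "c \<in> f ` A"
    then obtain a where a: "a \<in> A" "c = f a" by blast
    define b where "b = (SOME b. b \<in> A \<inter> r `` {a})"
    have "\<exists>b. b \<in> A \<inter> r `` {a}" using a refl by blast
    then have "b \<in> A \<inter> r `` {a}" unfolding b_def by (rule someI_ex)
    then have "f b = c" using a respects[of a b] by simp
    then have "g (r `` {a}) = c" by (simp only: g_def b_def)
    then show "c \<in> g ` (A // r)" using a(1) by (auto simp: quotient_def)
  qed
  moreover have "finite (A // r)"
    using \<open>finite A\<close> by (simp add: quotient_def)
  ultimately have "card (f ` A) \<le> card (g ` (A // r))"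
    by (intro card_mono) auto
  also have "\<dots> \<le> card (A // r)"
    using \<open>finite (A // r)\<close> by (rule card_image_le)
  finally show ?thesis .
qed

lemma card_block_labels_le: "card (block_label n G y ` {..<n}) \<le> num_components n G"
  unfolding num_components_def
proof (rule card_image_le_card_quotient)
  fix a b assume "(a, b) \<in> {(i, j). i < n \<and> j < n \<and> G i j}\<^sup>*"
  then show "block_label n G y a = block_label n G y b" by (rule block_label_rtrancl)
qed auto

lemma block_label_in_block:
  assumes "C \<in> avg_blocks n G y" "y a \<in> C"
  shows "block_label n G y a = Inl C"
proof -
  have "y a \<in> avg_union n G y" using avg_block_subset assms by blast
  then show ?thesis
    unfolding block_label_def using avg_block_eq_component[OF assms] by simp
qed

lemma block_label_outside_blocks:
  assumes "\<forall>C\<in>avg_blocks n G y. y a \<notin> C"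
  shows "block_label n G y a = Inr a"
proof -
  have "y a \<notin> avg_union n G y" using assms Union_avg_blocks by blast
  then show ?thesis unfolding block_label_def by simp
qed

lemma sorted_rank_lower_bound:
  fixes f :: "nat \<Rightarrow> 'a::linorder"
  assumes \<sigma>: "bij_betw \<sigma> {..<n} {..<n}" and sorted: "\<And>i j. i \<le> j \<Longrightarrow> j < n \<Longrightarrow> f (\<sigma> i) \<le> f (\<sigma> j)"
    and "i < n" and few: "card {j. j < n \<and> f j < L} \<le> i"
  shows "L \<le> f (\<sigma> i)"
proof (rule ccontr)
  assume "\<not> L \<le> f (\<sigma> i)"
  then have "\<sigma> k < n \<and> f (\<sigma> k) < L" if "k \<le> i" for k
    using sorted[OF that \<open>i < n\<close>] bij_betw_apply[OF \<sigma>] that \<open>i < n\<close> by auto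
  then have "\<sigma> ` {..i} \<subseteq> {j. j < n \<and> f j < L}" by auto
  then have "card (\<sigma> ` {..i}) \<le> card {j. j < n \<and> f j < L}"
    by (intro card_mono) auto
  moreover have "inj_on \<sigma> {..i}"
    using \<sigma> \<open>i < n\<close> by (auto simp: bij_betw_def intro: inj_on_subset)
  then have "card (\<sigma> ` {..i}) = Suc i" by (simp add: card_image)
  ultimately show False using few by simp
qed

lemma span_interval_Icc:
  fixes w :: "nat \<Rightarrow> real"
  assumes sorted: "\<And>i j. i \<le> j \<Longrightarrow> j < n \<Longrightarrow> w i \<le> w j"
    and r: "r1 < n" "r2 < n" "w r1 \<le> w r2"
  obtains u v where "span_interval n w {w r1..w r2} = (u, v)" "u \<le> v" "v < n"
    "w u = w r1" "w v = w r2" "\<And>i. i < n \<Longrightarrow> w i \<in> {w r1..w r2} \<longleftrightarrow> u \<le> i \<and> i \<le> v"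
proof -
  define I where "I = {i. i < n \<and> w i \<in> {w r1..w r2}}"
  have fin: "finite I" and r1: "r1 \<in> I" and r2: "r2 \<in> I" using r unfolding I_def by auto
  then have mem: "Min I \<in> I" "Max I \<in> I" by (auto intro: Min_in Max_in)
  have le: "Min I \<le> r1" "r2 \<le> Max I" using fin r1 r2 by auto
  have ends: "w (Min I) = w r1" "w (Max I) = w r2"
    using mem le sorted[of "Min I" r1] sorted[of r2 "Max I"] r unfolding I_def by auto
  have iff: "w i \<in> {w r1..w r2} \<longleftrightarrow> Min I \<le> i \<and> i \<le> Max I" if "i < n" for i
  proof
    assume "w i \<in> {w r1..w r2}"
    then show "Min I \<le> i \<and> i \<le> Max I" using fin that unfolding I_def by auto
  next
    assume "Min I \<le> i \<and> i \<le> Max I"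
    then show "w i \<in> {w r1..w r2}"
      using ends sorted[of "Min I" i] sorted[of i "Max I"] mem that unfolding I_def by auto
  qed
  have "span_interval n w {w r1..w r2} = (Min I, Max I)" unfolding span_interval_def I_def by simp
  moreover have "Min I \<le> Max I" using le(1) Max_ge[OF fin r1] by linarith
  moreover have "Max I < n" using mem(2) unfolding I_def by simp
  ultimately show ?thesis using ends iff by (rule that)
qed

lemma obtain_sorting_bij:
  fixes f :: "nat \<Rightarrow> 'a::linorder"
  obtains \<sigma> where "bij_betw \<sigma> {..<n} {..<n}" "\<And>i j. i \<le> j \<Longrightarrow> j < n \<Longrightarrow> f (\<sigma> i) \<le> f (\<sigma> j)"
proof -
  define xs where "xs = sort_key f [0..<n]"
  have len: "length xs = n" and "distinct xs" and "set xs = {..<n}" and "sorted (map f xs)"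
    unfolding xs_def by auto
  then have "bij_betw ((!) xs) {..<n} {..<n}" by (intro bij_betw_nth) auto
  moreover have "f (xs ! i) \<le> f (xs ! j)" if "i \<le> j" "j < n" for i j
    using sorted_nth_mono[OF \<open>sorted (map f xs)\<close> that(1)] that len by simp
  ultimately show ?thesis by (rule that)
qed

section \<open>One averaging step\<close>

locale averaging_step =
  fixes n :: nat and \<rho> :: real and E :: "nat \<Rightarrow> nat \<Rightarrow> bool" and P :: "nat \<Rightarrow> nat \<Rightarrow> real"
    and x x' :: "nat \<Rightarrow> real"
  assumes rho_pos: "0 < \<rho>" and rho_le_1: "\<rho> \<le> 1"
    and self_loop: "i < n \<Longrightarrow> E i i"
    and edge_sym: "i < n \<Longrightarrow> j < n \<Longrightarrow> E i j \<Longrightarrow> E j i"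
    and weight_nonneg: "i < n \<Longrightarrow> j < n \<Longrightarrow> 0 \<le> P i j"
    and weight_pos_iff: "i < n \<Longrightarrow> j < n \<Longrightarrow> 0 < P i j \<longleftrightarrow> E i j"
    and weight_ge_rho: "i < n \<Longrightarrow> j < n \<Longrightarrow> 0 < P i j \<Longrightarrow> \<rho> \<le> P i j"
    and row_sum: "i < n \<Longrightarrow> (\<Sum>j<n. P i j) = 1"
    and step: "i < n \<Longrightarrow> x' i = (\<Sum>j<n. P i j * x j)"
begin

lemma neighbour_lower_bound:
  assumes j: "j < n" and b: "b < n" "E j b" and nbrs: "\<And>k. k < n \<Longrightarrow> E j k \<Longrightarrow> c \<le> x k"
  shows "\<rho> * x b + (1 - \<rho>) * c \<le> x' j"
proof -
  have nonneg: "0 \<le> P j k * (x k - c)" if "k < n" for k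
  proof (cases "E j k")
    case True then show ?thesis using that j nbrs weight_nonneg by simp
  next
    case False then have "P j k = 0" using that j weight_nonneg weight_pos_iff by force
    then show ?thesis by simp
  qed
  have "\<rho> * (x b - c) \<le> P j b * (x b - c)"
    using b j nbrs weight_ge_rho weight_pos_iff by (simp add: mult_right_mono)
  also have "\<dots> \<le> (\<Sum>k<n. P j k * (x k - c))"
    using b nonneg by (intro member_le_sum) auto
  also have "\<dots> = x' j - c"
    using j by (simp add: step row_sum right_diff_distrib sum_subtractf flip: sum_distrib_right)
  finally show ?thesis by (simp add: algebra_simps)
qed

lemma averaging_step_uminus: "averaging_step n \<rho> E P (\<lambda>j. - x j) (\<lambda>j. - x' j)"
  by unfold_locales (auto simp: rho_pos rho_le_1 self_loop edge_sym weight_nonneg weight_pos_iff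
      weight_ge_rho row_sum step sum_negf)

lemma lower_bound_above_level:
  assumes closed: "edge_closed n E x {a..b}" and "a \<le> c" "c \<le> b" and j: "j < n" "c \<le> x j"
  shows "(1 - \<rho>) * a + \<rho> * c \<le> x' j"
proof (cases "x j \<le> b")
  case True
  have "a \<le> x k" if "k < n" "E j k" for k
    using edge_closed_neighbour[OF closed j(1) that] \<open>a \<le> c\<close> j True by simp
  then have "\<rho> * x j + (1 - \<rho>) * a \<le> x' j"
    by (rule neighbour_lower_bound[OF j(1) j(1) self_loop[OF j(1)]])
  moreover have "\<rho> * c \<le> \<rho> * x j" using rho_pos j by simp
  ultimately show ?thesis by linarith
next
  case False
  have "b \<le> x k" if "k < n" "E j k" for k
    using edge_closed_neighbour_above[OF closed _ j(1) that] \<open>a \<le> c\<close> \<open>c \<le> b\<close> False by simp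
  then have "\<rho> * x j + (1 - \<rho>) * b \<le> x' j"
    by (rule neighbour_lower_bound[OF j(1) j(1) self_loop[OF j(1)]])
  moreover have "\<rho> * b \<le> \<rho> * x j" "(1 - \<rho>) * a \<le> (1 - \<rho>) * b" "\<rho> * c \<le> \<rho> * b"
    using rho_pos rho_le_1 \<open>a \<le> c\<close> \<open>c \<le> b\<close> False by (auto intro: mult_left_mono)
  ultimately show ?thesis by (simp add: algebra_simps)
qed

end

locale sorted_averaging_step = averaging_step +
  fixes \<sigma> \<sigma>' :: "nat \<Rightarrow> nat"
  assumes sigma_bij: "bij_betw \<sigma> {..<n} {..<n}"
    and sorted: "\<And>i j. i \<le> j \<Longrightarrow> j < n \<Longrightarrow> x (\<sigma> i) \<le> x (\<sigma> j)"
    and sigma'_bij: "bij_betw \<sigma>' {..<n} {..<n}"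
    and sorted': "\<And>i j. i \<le> j \<Longrightarrow> j < n \<Longrightarrow> x' (\<sigma>' i) \<le> x' (\<sigma>' j)"
begin

lemma obtain_rank:
  assumes "a < n"
  obtains r where "r < n" "\<sigma> r = a"
  using assms sigma_bij unfolding bij_betw_def by (metis imageE lessThan_iff)

lemma card_below_le:
  assumes "finite R" and above: "\<And>r. r < n \<Longrightarrow> r \<notin> R \<Longrightarrow> L \<le> x' (\<sigma> r)"
  shows "card {j. j < n \<and> x' j < L} \<le> card R"
proof -
  have "{j. j < n \<and> x' j < L} \<subseteq> \<sigma> ` R"
  proof
    fix j assume "j \<in> {j. j < n \<and> x' j < L}"
    then obtain r where "r < n" "\<sigma> r = j" "x' j < L" by (auto elim: obtain_rank)
    then show "j \<in> \<sigma> ` R" using above by force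
  qed
  then have "card {j. j < n \<and> x' j < L} \<le> card (\<sigma> ` R)"
    using \<open>finite R\<close> by (intro card_mono) auto
  also have "\<dots> \<le> card R" using \<open>finite R\<close> by (rule card_image_le)
  finally show ?thesis .
qed

lemma edge_across_gap:
  assumes covered: "{x (\<sigma> u)<..<x (\<sigma> v)} \<subseteq> avg_union n E x"
    and "u \<le> i" "i < v" "v < n" and gap: "x (\<sigma> i) < x (\<sigma> (Suc i))"
  obtains r b where "r \<le> i" "b < n" "\<sigma> r \<noteq> b" "E (\<sigma> r) b" "x (\<sigma> (Suc i)) \<le> x b"
proof -
  define p where "p = (x (\<sigma> i) + x (\<sigma> (Suc i))) / 2"
  have "x (\<sigma> u) \<le> x (\<sigma> i)" "x (\<sigma> (Suc i)) \<le> x (\<sigma> v)"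
    using sorted assms by auto
  then have "p \<in> avg_union n E x" using covered gap unfolding p_def by auto
  then obtain a b where ab: "a < n" "b < n" "a \<noteq> b" "E a b" "x a \<le> p" "p \<le> x b"
    unfolding mem_avg_union_iff using edge_sym by (metis atLeastAtMost_iff min_def max_def)
  obtain r where r: "r < n" "\<sigma> r = a" using ab(1) by (rule obtain_rank)
  obtain r' where r': "r' < n" "\<sigma> r' = b" using ab(2) by (rule obtain_rank)
  have "r \<le> i"
  proof (rule ccontr)
    assume "\<not> r \<le> i"
    then have "x (\<sigma> (Suc i)) \<le> x a" using sorted[of "Suc i" r] r by simp
    then show False using ab gap unfolding p_def by simp
  qed
  moreover have "Suc i \<le> r'"
  proof (rule ccontr)
    assume "\<not> Suc i \<le> r'"
    then have "x b \<le> x (\<sigma> i)" using sorted[of r' i] r' \<open>i < v\<close> \<open>v < n\<close> by simp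
    then show False using ab gap unfolding p_def by simp
  qed
  then have "x (\<sigma> (Suc i)) \<le> x b" using sorted[of "Suc i" r'] r' by simp
  ultimately show ?thesis using that ab r by blast
qed

text \<open>An edge crosses the gap between ranks \<open>i\<close> and \<open>i + 1\<close>; its lower endpoint has rank at
  most \<open>i\<close> but is pulled above the level by its other endpoint.\<close>

lemma few_below_at_gap:
  assumes closed: "edge_closed n E x {x (\<sigma> u)..x (\<sigma> v)}"
    and covered: "{x (\<sigma> u)<..<x (\<sigma> v)} \<subseteq> avg_union n E x"
    and "u \<le> i" "i < v" "v < n" and gap: "x (\<sigma> i) < x (\<sigma> (Suc i))"
  shows "card {j. j < n \<and> x' j < (1 - \<rho>) * x (\<sigma> u) + \<rho> * x (\<sigma> (Suc i))} \<le> i"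
    (is "card {j. j < n \<and> x' j < ?L} \<le> i")
proof -
  obtain r b where r: "r \<le> i" and b: "b < n" "\<sigma> r \<noteq> b" "E (\<sigma> r) b" "x (\<sigma> (Suc i)) \<le> x b"
    using edge_across_gap[OF covered assms(3-6)] .
  have rn: "r < n" "\<sigma> r < n"
    using r assms(4,5) bij_betw_apply[OF sigma_bij] by auto
  have inside: "x (\<sigma> u) \<le> x (\<sigma> i)" "x (\<sigma> i) \<le> x (\<sigma> v)" "x (\<sigma> r) \<le> x (\<sigma> i)"
    using sorted assms r by auto
  have "edge_interval x (\<sigma> r) b \<subseteq> {x (\<sigma> u)..x (\<sigma> v)}"
    by (rule edge_closedD[OF closed rn(2) b(1-3), of "x (\<sigma> i)"])
      (use inside b(4) gap in auto)
  then have "x (\<sigma> u) \<le> x k" if "k < n" "E (\<sigma> r) k" for k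
    using edge_closed_neighbour[OF closed rn(2) that] by simp
  then have "\<rho> * x b + (1 - \<rho>) * x (\<sigma> u) \<le> x' (\<sigma> r)"
    by (rule neighbour_lower_bound[OF rn(2) b(1,3)])
  moreover have "\<rho> * x (\<sigma> (Suc i)) \<le> \<rho> * x b" using b(4) rho_pos by simp
  ultimately have r_above: "?L \<le> x' (\<sigma> r)" by linarith
  have "card {j. j < n \<and> x' j < ?L} \<le> card ({..i} - {r})"
  proof (rule card_below_le)
    fix k assume k: "k < n" "k \<notin> {..i} - {r}"
    show "?L \<le> x' (\<sigma> k)"
    proof (cases "k = r")
      case False
      then have "x (\<sigma> (Suc i)) \<le> x (\<sigma> k)" using k sorted[of "Suc i" k] by auto
      moreover have "x (\<sigma> u) \<le> x (\<sigma> (Suc i))" "x (\<sigma> (Suc i)) \<le> x (\<sigma> v)"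
        using inside gap sorted assms by auto
      moreover have "\<sigma> k < n" using k(1) bij_betw_apply[OF sigma_bij] by simp
      ultimately show ?thesis using lower_bound_above_level[OF closed] by blast
    qed (use r_above in simp)
  qed simp
  then show ?thesis using r by simp
qed

lemma twist_lower_bound:
  assumes closed: "edge_closed n E x {x (\<sigma> u)..x (\<sigma> v)}"
    and covered: "{x (\<sigma> u)<..<x (\<sigma> v)} \<subseteq> avg_union n E x"
    and "u \<le> i" "i \<le> v" "v < n"
  shows "(1 - \<rho>) * x (\<sigma> u) + \<rho> * x (\<sigma> (min (i + 1) v)) \<le> x' (\<sigma>' i)"
proof -
  define c where "c = min (i + 1) v"
  define L where "L = (1 - \<rho>) * x (\<sigma> u) + \<rho> * x (\<sigma> c)"
  have "card {j. j < n \<and> x' j < L} \<le> i"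
  proof (cases "x (\<sigma> c) \<le> x (\<sigma> i)")
    case True
    have "card {j. j < n \<and> x' j < L} \<le> card {..<i}"
    proof (rule card_below_le)
      fix r assume r: "r < n" "r \<notin> {..<i}"
      then have "x (\<sigma> c) \<le> x (\<sigma> r)" using True sorted[of i r] by simp
      moreover have "x (\<sigma> u) \<le> x (\<sigma> c)" "x (\<sigma> c) \<le> x (\<sigma> v)"
        using sorted assms unfolding c_def by auto
      ultimately show "L \<le> x' (\<sigma> r)"
        unfolding L_def using lower_bound_above_level[OF closed] bij_betw_apply[OF sigma_bij] r by simp
    qed simp
    then show ?thesis by simp
  next
    case False
    have "i < v"
    proof (rule ccontr)
      assume "\<not> i < v"
      then have "c = i" unfolding c_def using \<open>i \<le> v\<close> by simp
      then show False using False by simp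
    qed
    moreover from this have "c = Suc i" unfolding c_def by simp
    ultimately show ?thesis
      using few_below_at_gap[OF closed covered \<open>u \<le> i\<close> _ \<open>v < n\<close>] False unfolding L_def by simp
  qed
  then have "L \<le> x' (\<sigma>' i)"
    using sorted_rank_lower_bound[where f = x', OF sigma'_bij sorted'] assms by simp
  then show ?thesis unfolding L_def c_def .
qed

lemma sorted_averaging_step_reflect:
  "sorted_averaging_step n \<rho> E P (\<lambda>j. - x j) (\<lambda>j. - x' j) (\<lambda>r. \<sigma> (n - 1 - r)) (\<lambda>r. \<sigma>' (n - 1 - r))"
proof (intro sorted_averaging_step.intro averaging_step_uminus sorted_averaging_step_axioms.intro)
  have reverse: "bij_betw (\<lambda>r. n - 1 - r) {..<n} {..<n}"
    by (rule bij_betw_byWitness[where f' = "\<lambda>r. n - 1 - r"]) auto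
  show "bij_betw (\<lambda>r. \<sigma> (n - 1 - r)) {..<n} {..<n}" "bij_betw (\<lambda>r. \<sigma>' (n - 1 - r)) {..<n} {..<n}"
    using bij_betw_trans[OF reverse sigma_bij] bij_betw_trans[OF reverse sigma'_bij] by (simp_all add: comp_def)
  fix i j assume "i \<le> j" "j < n"
  then show "- x (\<sigma> (n - 1 - i)) \<le> - x (\<sigma> (n - 1 - j))" "- x' (\<sigma>' (n - 1 - i)) \<le> - x' (\<sigma>' (n - 1 - j))"
    using sorted[of "n - 1 - j" "n - 1 - i"] sorted'[of "n - 1 - j" "n - 1 - i"] by auto
qed

lemma twist_upper_bound:
  assumes closed: "edge_closed n E x {x (\<sigma> u)..x (\<sigma> v)}"
    and covered: "{x (\<sigma> u)<..<x (\<sigma> v)} \<subseteq> avg_union n E x"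
    and "u \<le> i" "i \<le> v" "v < n"
  shows "x' (\<sigma>' i) \<le> \<rho> * x (\<sigma> (max (i - 1) u)) + (1 - \<rho>) * x (\<sigma> v)"
proof -
  interpret reflected: sorted_averaging_step n \<rho> E P "\<lambda>j. - x j" "\<lambda>j. - x' j"
    "\<lambda>r. \<sigma> (n - 1 - r)" "\<lambda>r. \<sigma>' (n - 1 - r)"
    by (rule sorted_averaging_step_reflect)
  have flip: "n - 1 - (n - 1 - v) = v" "n - 1 - (n - 1 - u) = u" "n - 1 - (n - 1 - i) = i"
    "n - 1 - min (n - 1 - i + 1) (n - 1 - u) = max (i - 1) u"
    using assms(3-5) by auto
  have "edge_closed n E (\<lambda>j. - x j) {- x (\<sigma> (n - 1 - (n - 1 - v)))..- x (\<sigma> (n - 1 - (n - 1 - u)))}"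
    using edge_closed_uminus[OF closed] unfolding flip by simp
  moreover have "{- x (\<sigma> (n - 1 - (n - 1 - v)))<..<- x (\<sigma> (n - 1 - (n - 1 - u)))} \<subseteq> avg_union n E (\<lambda>j. - x j)"
    using image_mono[OF covered, of uminus] unfolding flip avg_union_uminus by simp
  ultimately have "(1 - \<rho>) * - x (\<sigma> (n - 1 - (n - 1 - v)))
      + \<rho> * - x (\<sigma> (n - 1 - min (n - 1 - i + 1) (n - 1 - u))) \<le> - x' (\<sigma>' (n - 1 - (n - 1 - i)))"
    by (rule reflected.twist_lower_bound) (use assms(3-5) in auto)
  then show ?thesis unfolding flip by (simp add: algebra_simps)
qed

end

section \<open>Twist blocks\<close>

definition isolated_ranks :: "nat \<Rightarrow> (nat \<Rightarrow> nat \<Rightarrow> bool) \<Rightarrow> (nat \<Rightarrow> real) \<Rightarrow> (nat \<Rightarrow> nat) \<Rightarrow> nat set" where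
  "isolated_ranks n G y \<sigma> = {i. i < n \<and> (\<forall>C\<in>avg_blocks n G y. y (\<sigma> i) \<notin> C)}"

definition twist_blocks :: "nat \<Rightarrow> (nat \<Rightarrow> nat \<Rightarrow> bool) \<Rightarrow> (nat \<Rightarrow> real) \<Rightarrow> (nat \<Rightarrow> nat) \<Rightarrow> (nat \<times> nat) set" where
  "twist_blocks n G y \<sigma> =
     span_interval n (\<lambda>i. y (\<sigma> i)) ` avg_blocks n G y \<union> (\<lambda>i. (i, i)) ` isolated_ranks n G y \<sigma>"

locale sorted_positions =
  fixes n :: nat and G :: "nat \<Rightarrow> nat \<Rightarrow> bool" and y :: "nat \<Rightarrow> real" and \<sigma> :: "nat \<Rightarrow> nat"
  assumes sigma_bij: "bij_betw \<sigma> {..<n} {..<n}"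
    and sorted: "\<And>i j. i \<le> j \<Longrightarrow> j < n \<Longrightarrow> y (\<sigma> i) \<le> y (\<sigma> j)"
begin

lemma avg_block_span:
  assumes C: "C \<in> avg_blocks n G y"
  obtains u v where "span_interval n (\<lambda>i. y (\<sigma> i)) C = (u, v)" "u \<le> v" "v < n"
    "C = {y (\<sigma> u)..y (\<sigma> v)}" "\<And>i. i < n \<Longrightarrow> y (\<sigma> i) \<in> C \<longleftrightarrow> u \<le> i \<and> i \<le> v"
proof -
  obtain a b where ab: "a < n" "b < n" "y a \<le> y b" "C = {y a..y b}"
    using C by (rule avg_block_Icc)
  obtain r1 r2 where r: "r1 < n" "\<sigma> r1 = a" "r2 < n" "\<sigma> r2 = b"
    using ab(1,2) sigma_bij unfolding bij_betw_def by (metis imageE lessThan_iff)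
  then have C_eq: "C = {y (\<sigma> r1)..y (\<sigma> r2)}" using ab(4) by simp
  obtain u v where uv: "span_interval n (\<lambda>i. y (\<sigma> i)) {y (\<sigma> r1)..y (\<sigma> r2)} = (u, v)" "u \<le> v" "v < n"
    "y (\<sigma> u) = y (\<sigma> r1)" "y (\<sigma> v) = y (\<sigma> r2)"
    "\<And>i. i < n \<Longrightarrow> y (\<sigma> i) \<in> {y (\<sigma> r1)..y (\<sigma> r2)} \<longleftrightarrow> u \<le> i \<and> i \<le> v"
    by (rule span_interval_Icc[of n "\<lambda>i. y (\<sigma> i)" r1 r2]) (use sorted r ab(3) in auto)
  show ?thesis
  proof (rule that)
    show "span_interval n (\<lambda>i. y (\<sigma> i)) C = (u, v)" "C = {y (\<sigma> u)..y (\<sigma> v)}"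
      using C_eq uv(1,4,5) by simp_all
    show "y (\<sigma> i) \<in> C \<longleftrightarrow> u \<le> i \<and> i \<le> v" if "i < n" for i
      using C_eq uv(6)[OF that] by simp
  qed (use uv(2,3) in auto)
qed

lemma twist_block_cases:
  assumes "(u, v) \<in> twist_blocks n G y \<sigma>"
  obtains (block) C where "C \<in> avg_blocks n G y" "span_interval n (\<lambda>i. y (\<sigma> i)) C = (u, v)"
      "u \<le> v" "v < n" "C = {y (\<sigma> u)..y (\<sigma> v)}"
      "\<And>i. i < n \<Longrightarrow> y (\<sigma> i) \<in> C \<longleftrightarrow> u \<le> i \<and> i \<le> v"
  | (isolated) "u \<in> isolated_ranks n G y \<sigma>" "v = u"
  using assms unfolding twist_blocks_def
proof
  assume "(u, v) \<in> span_interval n (\<lambda>i. y (\<sigma> i)) ` avg_blocks n G y"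
  then obtain C where C: "C \<in> avg_blocks n G y" "span_interval n (\<lambda>i. y (\<sigma> i)) C = (u, v)" by auto
  obtain u' v' where uv: "span_interval n (\<lambda>i. y (\<sigma> i)) C = (u', v')" "u' \<le> v'" "v' < n"
    "C = {y (\<sigma> u')..y (\<sigma> v')}" "\<And>i. i < n \<Longrightarrow> y (\<sigma> i) \<in> C \<longleftrightarrow> u' \<le> i \<and> i \<le> v'"
    using avg_block_span[OF C(1)] by blast
  from uv(1) C(2) have "u' = u" "v' = v" by simp_all
  show thesis
    by (rule block[OF C]) (use uv \<open>u' = u\<close> \<open>v' = v\<close> in auto)
qed (use isolated in auto)

lemma isolated_rank_outside_union:
  "i \<in> isolated_ranks n G y \<sigma> \<Longrightarrow> y (\<sigma> i) \<notin> avg_union n G y"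
  unfolding isolated_ranks_def using Union_avg_blocks by blast

lemma twist_block_separated:
  assumes "(u, v) \<in> twist_blocks n G y \<sigma>"
  shows "u \<le> v \<and> v < n \<and> edge_closed n G y {y (\<sigma> u)..y (\<sigma> v)}
    \<and> {y (\<sigma> u)<..<y (\<sigma> v)} \<subseteq> avg_union n G y"
  using assms
proof (cases rule: twist_block_cases)
  case (block C)
  have "{y (\<sigma> u)<..<y (\<sigma> v)} \<subseteq> C" unfolding block(5) by auto
  then have "{y (\<sigma> u)<..<y (\<sigma> v)} \<subseteq> avg_union n G y"
    using avg_block_subset[OF block(1)] by (rule order_trans)
  then show ?thesis
    using edge_closed_avg_block[OF block(1)] block(3-5) by simp
next
  case isolated
  then have "{y (\<sigma> u)..y (\<sigma> v)} \<inter> avg_union n G y = {}"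
    using isolated_rank_outside_union by auto
  then show ?thesis
    using isolated edge_closed_disjoint by (auto simp: isolated_ranks_def)
qed

lemma twist_block_label:
  assumes "(u, v) \<in> twist_blocks n G y \<sigma>" "u \<le> i" "i \<le> v"
  shows "block_label n G y (\<sigma> i) = block_label n G y (\<sigma> u)"
  using assms(1)
proof (cases rule: twist_block_cases)
  case (block C)
  then have "y (\<sigma> i) \<in> C" "y (\<sigma> u) \<in> C"
    using block(6)[of i] block(6)[of u] assms(2,3) by simp_all
  then show ?thesis using block_label_in_block[OF block(1)] by simp
qed (use assms in simp)

lemma block_label_twist_block:
  assumes "(u, v) \<in> twist_blocks n G y \<sigma>"
  shows "block_label n G y (\<sigma> u) =
    (if u \<in> isolated_ranks n G y \<sigma> then Inr (\<sigma> u) else Inl {y (\<sigma> u)..y (\<sigma> v)})"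
  using assms
proof (cases rule: twist_block_cases)
  case (block C)
  then have "y (\<sigma> u) \<in> C" by auto
  then show ?thesis
    using block block_label_in_block[OF block(1)] by (auto simp: isolated_ranks_def)
qed (auto simp: isolated_ranks_def intro: block_label_outside_blocks)

lemma isolated_twist_block:
  assumes "(u, v) \<in> twist_blocks n G y \<sigma>" "u \<in> isolated_ranks n G y \<sigma>"
  shows "v = u"
  using assms(1)
proof (cases rule: twist_block_cases)
  case (block C)
  then have "y (\<sigma> u) \<in> C" by auto
  with block(1) assms(2) show ?thesis by (auto simp: isolated_ranks_def)
qed

lemma span_interval_twist_block:
  assumes "(u, v) \<in> twist_blocks n G y \<sigma>" "u \<notin> isolated_ranks n G y \<sigma>"
  shows "span_interval n (\<lambda>i. y (\<sigma> i)) {y (\<sigma> u)..y (\<sigma> v)} = (u, v)"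
  using assms(1)
proof (cases rule: twist_block_cases)
  case (block C)
  then show ?thesis by simp
qed (use assms(2) in simp)

lemma inj_on_twist_block_label: "inj_on (\<lambda>(u, v). block_label n G y (\<sigma> u)) (twist_blocks n G y \<sigma>)"
proof (rule inj_onI, clarify)
  fix u v u' v' assume b: "(u, v) \<in> twist_blocks n G y \<sigma>" and b': "(u', v') \<in> twist_blocks n G y \<sigma>"
    and eq: "block_label n G y (\<sigma> u) = block_label n G y (\<sigma> u')"
  note labels = block_label_twist_block[OF b] block_label_twist_block[OF b']
  show "u = u' \<and> v = v'"
  proof (cases "u \<in> isolated_ranks n G y \<sigma>")
    case True
    then have u': "u' \<in> isolated_ranks n G y \<sigma>" and "\<sigma> u = \<sigma> u'"
      using eq labels by (auto split: if_splits)
    moreover have "u < n" "u' < n" using True u' by (auto simp: isolated_ranks_def)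
    ultimately have "u = u'" using sigma_bij by (auto simp: bij_betw_def inj_on_def)
    moreover have "v = u" "v' = u'"
      using isolated_twist_block[OF b True] isolated_twist_block[OF b' u'] by simp_all
    ultimately show ?thesis by simp
  next
    case False
    then have u': "u' \<notin> isolated_ranks n G y \<sigma>"
      and same: "{y (\<sigma> u)..y (\<sigma> v)} = {y (\<sigma> u')..y (\<sigma> v')}"
      using eq labels by (auto split: if_splits)
    have "(u, v) = span_interval n (\<lambda>i. y (\<sigma> i)) {y (\<sigma> u)..y (\<sigma> v)}"
      using span_interval_twist_block[OF b False] by simp
    also have "\<dots> = span_interval n (\<lambda>i. y (\<sigma> i)) {y (\<sigma> u')..y (\<sigma> v')}"
      by (simp only: same)
    also have "\<dots> = (u', v')" by (rule span_interval_twist_block[OF b' u'])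
    finally show ?thesis by simp
  qed
qed

lemma twist_blocks_cover:
  assumes "i < n"
  obtains b where "b \<in> twist_blocks n G y \<sigma>" "i \<in> {fst b..snd b}"
proof (cases "i \<in> isolated_ranks n G y \<sigma>")
  case True
  then show ?thesis using that[of "(i, i)"] unfolding twist_blocks_def by auto
next
  case False
  then obtain C where C: "C \<in> avg_blocks n G y" "y (\<sigma> i) \<in> C"
    using assms unfolding isolated_ranks_def by blast
  obtain u v where uv: "span_interval n (\<lambda>i. y (\<sigma> i)) C = (u, v)"
    "\<And>i. i < n \<Longrightarrow> y (\<sigma> i) \<in> C \<longleftrightarrow> u \<le> i \<and> i \<le> v"
    using avg_block_span[OF C(1)] by blast
  have "(u, v) \<in> twist_blocks n G y \<sigma>"
    unfolding twist_blocks_def using C(1) uv(1) by (metis UnI1 imageI)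
  then show ?thesis using that uv(2)[OF assms] C(2) by auto
qed

lemma twist_blocks_partition:
  assumes "i < n"
  shows "\<exists>!b\<in>twist_blocks n G y \<sigma>. i \<in> {fst b..snd b}"
proof (rule ex_ex1I)
  show "\<exists>b. b \<in> twist_blocks n G y \<sigma> \<and> i \<in> {fst b..snd b}"
    using twist_blocks_cover[OF assms] by blast
next
  fix b b' assume b: "b \<in> twist_blocks n G y \<sigma> \<and> i \<in> {fst b..snd b}"
    and b': "b' \<in> twist_blocks n G y \<sigma> \<and> i \<in> {fst b'..snd b'}"
  have "block_label n G y (\<sigma> (fst b)) = block_label n G y (\<sigma> (fst b'))"
    using twist_block_label[of "fst b" "snd b" i] twist_block_label[of "fst b'" "snd b'" i] b b' by simp
  then show "b = b'"
    using inj_on_twist_block_label b b' unfolding inj_on_def by (auto simp: case_prod_beta)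
qed

lemma finite_twist_blocks: "finite (twist_blocks n G y \<sigma>)"
proof -
  have "finite (isolated_ranks n G y \<sigma>)" unfolding isolated_ranks_def by simp
  then show ?thesis unfolding twist_blocks_def using finite_avg_blocks[of n G y] by simp
qed

lemma card_twist_blocks_le: "card (twist_blocks n G y \<sigma>) \<le> num_components n G"
proof -
  let ?label = "\<lambda>(u, v). block_label n G y (\<sigma> u)"
  have "\<sigma> u < n" if "(u, v) \<in> twist_blocks n G y \<sigma>" for u v
    using twist_block_separated[OF that] bij_betw_apply[OF sigma_bij] by simp
  then have "?label ` twist_blocks n G y \<sigma> \<subseteq> block_label n G y ` {..<n}" by auto
  then have "card (?label ` twist_blocks n G y \<sigma>) \<le> card (block_label n G y ` {..<n})"
    by (intro card_mono) auto
  also have "\<dots> \<le> num_components n G" by (rule card_block_labels_le)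
  finally show ?thesis
    using card_image[OF inj_on_twist_block_label] by simp
qed

lemma twist_blocks_energy:
  "(\<Sum>(u, v)\<in>twist_blocks n G y \<sigma>. (y (\<sigma> v) - y (\<sigma> u)) powr s)
     = (\<Sum>C\<in>avg_blocks n G y. (Sup C - Inf C) powr s)"
proof -
  let ?span = "span_interval n (\<lambda>i. y (\<sigma> i))"
  let ?f = "\<lambda>(u, v). (y (\<sigma> v) - y (\<sigma> u)) powr s"
  have "sum ?f (twist_blocks n G y \<sigma>) = sum ?f (?span ` avg_blocks n G y)"
    by (rule sum.mono_neutral_right[OF finite_twist_blocks]) (auto simp: twist_blocks_def)
  also have "\<dots> = (\<Sum>C\<in>avg_blocks n G y. ?f (?span C))"
  proof (rule sum.reindex[unfolded comp_def], rule inj_onI)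
    fix C C' assume C: "C \<in> avg_blocks n G y" and C': "C' \<in> avg_blocks n G y" and eq: "?span C = ?span C'"
    obtain u v where "?span C = (u, v)" "C = {y (\<sigma> u)..y (\<sigma> v)}"
      using avg_block_span[OF C] by blast
    moreover obtain u' v' where "?span C' = (u', v')" "C' = {y (\<sigma> u')..y (\<sigma> v')}"
      using avg_block_span[OF C'] by blast
    ultimately show "C = C'" using eq by simp
  qed
  also have "\<dots> = (\<Sum>C\<in>avg_blocks n G y. (Sup C - Inf C) powr s)"
  proof (rule sum.cong[OF refl])
    fix C assume "C \<in> avg_blocks n G y"
    then obtain u v where "?span C = (u, v)" "u \<le> v" "v < n" "C = {y (\<sigma> u)..y (\<sigma> v)}"
      by (rule avg_block_span)
    moreover have "y (\<sigma> u) \<le> y (\<sigma> v)" using sorted calculation by simp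
    ultimately show "?f (?span C) = (Sup C - Inf C) powr s" by simp
  qed
  finally show ?thesis .
qed

end

sublocale sorted_averaging_step \<subseteq> sorted_positions n E x \<sigma>
  by unfold_locales (fact sigma_bij sorted)+

context sorted_averaging_step
begin

lemma twist_block_bounds:
  assumes "(u, v) \<in> twist_blocks n E x \<sigma>" "i \<in> {u..v}"
  shows "(1 - \<rho>) * x (\<sigma> u) + \<rho> * x (\<sigma> (min (i + 1) v)) \<le> x' (\<sigma>' i)"
    and "x' (\<sigma>' i) \<le> \<rho> * x (\<sigma> (max (i - 1) u)) + (1 - \<rho>) * x (\<sigma> v)"
proof -
  have sep: "v < n" "edge_closed n E x {x (\<sigma> u)..x (\<sigma> v)}"
    "{x (\<sigma> u)<..<x (\<sigma> v)} \<subseteq> avg_union n E x"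
    using twist_block_separated[OF assms(1)] by simp_all
  show "(1 - \<rho>) * x (\<sigma> u) + \<rho> * x (\<sigma> (min (i + 1) v)) \<le> x' (\<sigma>' i)"
    using twist_lower_bound[OF sep(2,3) _ _ sep(1)] assms(2) by simp
  show "x' (\<sigma>' i) \<le> \<rho> * x (\<sigma> (max (i - 1) u)) + (1 - \<rho>) * x (\<sigma> v)"
    using twist_upper_bound[OF sep(2,3) _ _ sep(1)] assms(2) by simp
qed

end

lemma averaging_system_step:
  assumes "averaging_system n \<rho> E P x"
  shows "averaging_step n \<rho> (E t) (P t) (x t) (x (Suc t))"
  by unfold_locales (use assms in \<open>auto simp: averaging_system_def\<close>)

theorem lemma2:
  fixes n m :: nat and \<rho> :: real
    and E :: "nat \<Rightarrow> nat \<Rightarrow> nat \<Rightarrow> bool" and P :: "nat \<Rightarrow> nat \<Rightarrow> nat \<Rightarrow> real"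
    and x :: "nat \<Rightarrow> nat \<Rightarrow> real"
  assumes "averaging_system n \<rho> E P x"
    and "\<forall>t. num_components n (E t) \<le> m"
  shows "\<exists>\<sigma> B.
     (\<forall>t. bij_betw (\<sigma> t) {..<n} {..<n}) \<and>
     twist_system n \<rho> m (\<lambda>t i. x t (\<sigma> t i)) B \<and>
     (\<forall>t. B t = span_interval n (\<lambda>i. x t (\<sigma> t i)) ` avg_blocks n (E t) (x t)
              \<union> {(i, i) | i. i < n \<and> (\<forall>C\<in>avg_blocks n (E t) (x t). x t (\<sigma> t i) \<notin> C)}) \<and>
     (\<forall>s. 0 < s \<and> s \<le> 1 \<longrightarrow>
        twist_energy (\<lambda>t i. x t (\<sigma> t i)) B s = avg_energy n E x s)"
proof -
  have "\<forall>t. \<exists>\<tau>. bij_betw \<tau> {..<n} {..<n} \<and> (\<forall>i j. i \<le> j \<longrightarrow> j < n \<longrightarrow> x t (\<tau> i) \<le> x t (\<tau> j))"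
    by (metis obtain_sorting_bij)
  then obtain \<sigma> where \<sigma>: "\<And>t. bij_betw (\<sigma> t) {..<n} {..<n}"
    and sorted: "\<And>t i j. i \<le> j \<Longrightarrow> j < n \<Longrightarrow> x t (\<sigma> t i) \<le> x t (\<sigma> t j)"
    by metis
  define B where "B t = twist_blocks n (E t) (x t) (\<sigma> t)" for t
  interpret sorted_averaging_step n \<rho> "E t" "P t" "x t" "x (Suc t)" "\<sigma> t" "\<sigma> (Suc t)" for t
    by (intro sorted_averaging_step.intro averaging_system_step[OF assms(1)]
        sorted_averaging_step_axioms.intro \<sigma> sorted)
  have "card (B t) \<le> m" for t
    unfolding B_def using card_twist_blocks_le assms(2) le_trans by blast
  then have "twist_system n \<rho> m (\<lambda>t i. x t (\<sigma> t i)) B"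
    unfolding twist_system_def B_def
    using sorted finite_twist_blocks twist_block_separated twist_blocks_partition twist_block_bounds
    by auto
  moreover have "B t = span_interval n (\<lambda>i. x t (\<sigma> t i)) ` avg_blocks n (E t) (x t)
              \<union> {(i, i) | i. i < n \<and> (\<forall>C\<in>avg_blocks n (E t) (x t). x t (\<sigma> t i) \<notin> C)}" for t
    unfolding B_def twist_blocks_def isolated_ranks_def by blast
  \<comment> \<open>This holds for every \<open>s\<close>: singleton twist blocks contribute \<open>0 powr s = 0\<close>.\<close>
  moreover have "twist_energy (\<lambda>t i. x t (\<sigma> t i)) B s = avg_energy n E x s" for s
    unfolding twist_energy_def avg_energy_def B_def twist_blocks_energy ..
  ultimately show ?thesis using \<sigma> by blast
qed

end
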